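(* Let $n\ge 7$, let $q\equiv 1\pmod 4$, and let $G$ be an almost simple primitive permutation group with socle $G_0=\mathrm{P\Omega}^\epsilon_n(q)$ acting on the set $X$ of non-degenerate $2$-dimensional subspaces of type $\mathrm{O}_2^-$ of the natural module $V_n(q)$. Then $\mathrm{diam}(X,G)\ge 3$.
   Context: $V_n(q)$ carries a non-degenerate quadratic form. A non-degenerate $2$-space is of type $\mathrm{O}_2^+$ if it contains a non-zero singular vector and of type $\mathrm{O}_2^-$ otherwise. An (undirected) orbital graph of $(X,G)$ has as edge set a single $G$-orbit on unordered $2$-subsets of $X$; $\mathrm{diam}(X,G)$ is the maximum diameter of such graphs. *)

theory Defs
  imports Main "HOL-Library.Extended_Nat" "HOL-Library.Cardinality"
begin

text \<open>Vectors of V_n(q) are functions 'n => 'k, with 'k a finite field and CARD('n) = n.\<close>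

definition vzero :: "'n \<Rightarrow> 'k::field" where "vzero = (\<lambda>i. 0)"
definition vadd :: "('n \<Rightarrow> 'k::field) \<Rightarrow> ('n \<Rightarrow> 'k) \<Rightarrow> ('n \<Rightarrow> 'k)" where
  "vadd u v = (\<lambda>i. u i + v i)"
definition smult :: "'k::field \<Rightarrow> ('n \<Rightarrow> 'k) \<Rightarrow> ('n \<Rightarrow> 'k)" where
  "smult c v = (\<lambda>i. c * v i)"

definition bform :: "(('n \<Rightarrow> 'k::field) \<Rightarrow> 'k) \<Rightarrow> ('n \<Rightarrow> 'k) \<Rightarrow> ('n \<Rightarrow> 'k) \<Rightarrow> 'k" where
  "bform Q u v = Q (vadd u v) - Q u - Q v"

definition is_quadratic_form :: "(('n \<Rightarrow> 'k::field) \<Rightarrow> 'k) \<Rightarrow> bool" where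
  "is_quadratic_form Q \<longleftrightarrow>
     (\<forall>c v. Q (smult c v) = c^2 * Q v) \<and>
     (\<forall>u u' v. bform Q (vadd u u') v = bform Q u v + bform Q u' v) \<and>
     (\<forall>c u v. bform Q (smult c u) v = c * bform Q u v)"

text \<open>Non-degenerate (q odd): the polar form has trivial radical.\<close>
definition nondegenerate :: "(('n \<Rightarrow> 'k::field) \<Rightarrow> 'k) \<Rightarrow> bool" where
  "nondegenerate Q \<longleftrightarrow> (\<forall>u. (\<forall>v. bform Q u v = 0) \<longrightarrow> u = vzero)"

definition span2 :: "('n \<Rightarrow> 'k::field) \<Rightarrow> ('n \<Rightarrow> 'k) \<Rightarrow> ('n \<Rightarrow> 'k) set" where
  "span2 u v = {vadd (smult a u) (smult b v) | a b. True}"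

definition two_subspace :: "('n \<Rightarrow> 'k::field) set \<Rightarrow> bool" where
  "two_subspace W \<longleftrightarrow> (\<exists>u v. (\<forall>a b. vadd (smult a u) (smult b v) = vzero \<longrightarrow> a = 0 \<and> b = 0)
                              \<and> W = span2 u v)"

definition nondeg_on :: "(('n \<Rightarrow> 'k::field) \<Rightarrow> 'k) \<Rightarrow> ('n \<Rightarrow> 'k) set \<Rightarrow> bool" where
  "nondeg_on Q W \<longleftrightarrow> (\<forall>w\<in>W. (\<forall>w'\<in>W. bform Q w w' = 0) \<longrightarrow> w = vzero)"

text \<open>Type O_2^-: no non-zero singular vector.\<close>
definition minus_type :: "(('n \<Rightarrow> 'k::field) \<Rightarrow> 'k) \<Rightarrow> ('n \<Rightarrow> 'k) set \<Rightarrow> bool" where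
  "minus_type Q W \<longleftrightarrow> (\<forall>w\<in>W. Q w = 0 \<longrightarrow> w = vzero)"

definition O2minus_spaces :: "(('n \<Rightarrow> 'k::field) \<Rightarrow> 'k) \<Rightarrow> ('n \<Rightarrow> 'k) set set" where
  "O2minus_spaces Q = {W. two_subspace W \<and> nondeg_on Q W \<and> minus_type Q W}"

definition field_aut :: "('k::field \<Rightarrow> 'k) \<Rightarrow> bool" where
  "field_aut \<sigma> \<longleftrightarrow> bij \<sigma> \<and> (\<forall>a b. \<sigma> (a + b) = \<sigma> a + \<sigma> b) \<and> (\<forall>a b. \<sigma> (a * b) = \<sigma> a * \<sigma> b)"

definition semisimilarity :: "(('n \<Rightarrow> 'k::field) \<Rightarrow> 'k) \<Rightarrow> (('n \<Rightarrow> 'k) \<Rightarrow> ('n \<Rightarrow> 'k)) \<Rightarrow> bool" where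
  "semisimilarity Q g \<longleftrightarrow> bij g \<and> (\<forall>u v. g (vadd u v) = vadd (g u) (g v)) \<and>
     (\<exists>\<sigma> \<mu>. field_aut \<sigma> \<and> \<mu> \<noteq> 0 \<and> (\<forall>c v. g (smult c v) = smult (\<sigma> c) (g v)) \<and>
            (\<forall>v. Q (g v) = \<mu> * \<sigma> (Q v)))"

definition isometry :: "(('n \<Rightarrow> 'k::field) \<Rightarrow> 'k) \<Rightarrow> (('n \<Rightarrow> 'k) \<Rightarrow> ('n \<Rightarrow> 'k)) \<Rightarrow> bool" where
  "isometry Q g \<longleftrightarrow> bij g \<and> (\<forall>u v. g (vadd u v) = vadd (g u) (g v)) \<and>
     (\<forall>c v. g (smult c v) = smult c (g v)) \<and> (\<forall>v. Q (g v) = Q v)"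

definition act :: "('v \<Rightarrow> 'v) \<Rightarrow> 'v set \<Rightarrow> 'v set" where
  "act g W = g ` W"

definition is_group_of_maps :: "('v \<Rightarrow> 'v) set \<Rightarrow> bool" where
  "is_group_of_maps H \<longleftrightarrow> id \<in> H \<and> (\<forall>g\<in>H. \<forall>h\<in>H. g \<circ> h \<in> H) \<and> (\<forall>g\<in>H. bij g \<and> inv g \<in> H)"

definition primitive_on :: "('v \<Rightarrow> 'v) set \<Rightarrow> 'v set set \<Rightarrow> bool" where
  "primitive_on H X \<longleftrightarrow> X \<noteq> {} \<and>
     (\<forall>x\<in>X. \<forall>y\<in>X. \<exists>g\<in>H. act g x = y) \<and>
     (\<forall>B. B \<subseteq> X \<longrightarrow> (\<forall>g\<in>H. act g ` B = B \<or> act g ` B \<inter> B = {}) \<longrightarrow> card B \<le> 1 \<or> B = X)"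

definition orbitals :: "('v \<Rightarrow> 'v) set \<Rightarrow> 'v set set \<Rightarrow> 'v set set set set" where
  "orbitals H X = {{{act g x, act g y} | g. g \<in> H} | x y. x \<in> X \<and> y \<in> X \<and> x \<noteq> y}"

definition walk :: "'a set set \<Rightarrow> 'a \<Rightarrow> 'a \<Rightarrow> nat \<Rightarrow> bool" where
  "walk E x y k \<longleftrightarrow> (\<exists>p. length p = Suc k \<and> p ! 0 = x \<and> p ! k = y \<and> (\<forall>i<k. {p ! i, p ! Suc i} \<in> E))"

definition graph_dist :: "'a set set \<Rightarrow> 'a \<Rightarrow> 'a \<Rightarrow> enat" where
  "graph_dist E x y = (if \<exists>k. walk E x y k then enat (LEAST k. walk E x y k) else \<infinity>)"

definition graph_diam :: "'a set \<Rightarrow> 'a set set \<Rightarrow> enat" where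
  "graph_diam X E = Sup {graph_dist E x y | x y. x \<in> X \<and> y \<in> X}"

definition diam_action :: "('v \<Rightarrow> 'v) set \<Rightarrow> 'v set set \<Rightarrow> enat" where
  "diam_action H X = Sup {graph_diam X E | E. E \<in> orbitals H X}"

end

theory Submission
  imports Defs
begin

(*
  Call two planes adjacent if they are distinct, meet nontrivially and their sum is degenerate;
  semisimilarities preserve adjacency. Since n >= 5, an O2^- plane extends to an orthogonal
  family f0, ..., f4 of anisotropic vectors with X0 = <f0, f1> of type O2^-. As q is odd, every
  non-degenerate binary form represents every field element. This gives a singular vector r in
  <f2, f3, f4>, so X0 and Y0 = <f0, f1 + r> are adjacent O2^- planes and every edge of the orbital
  graph of {X0, Y0} joins adjacent planes; it also gives a plane W in <f2, f3, f4> isometric to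
  X0, hence an O2^- plane orthogonal to X0. No plane Z is adjacent to both X0 and W: it would be
  spanned by a in X0 and b in W, and then X0 + Z = X0 (+) <b> is non-degenerate. So X0 and W are
  at distance at least 3.
*)

section \<open>Linear combinations and quadratic forms\<close>

lemma vadd_comm: "vadd u v = vadd v u"
  by (auto simp: vadd_def add.commute)

lemma smult_one [simp]: "smult 1 v = v"
  by (simp add: smult_def)

lemma vzero_eq_smult_0: "vzero = smult 0 v"
  by (simp add: vzero_def smult_def)

lemma vadd_smult_zero: "vadd (smult 0 u) (smult 0 v) = vzero"
  by (simp add: vadd_def smult_def vzero_def)

definition lincomb :: "(nat \<Rightarrow> 'n \<Rightarrow> 'k::field) \<Rightarrow> 'k list \<Rightarrow> 'n \<Rightarrow> 'k" where
  "lincomb f cs = (\<lambda>x. \<Sum>j<length cs. cs ! j * f j x)"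

lemma lincomb_Nil: "lincomb f [] = vzero"
  by (simp add: lincomb_def vzero_def)

lemma lincomb_snoc: "lincomb f (cs @ [c]) = vadd (lincomb f cs) (smult c (f (length cs)))"
  by (simp add: lincomb_def vadd_def smult_def nth_append)

lemma lincomb_combine:
  assumes "length cs = length ds"
  shows "vadd (smult a (lincomb f cs)) (smult b (lincomb f ds)) =
    lincomb f (map2 (\<lambda>c d. a * c + b * d) cs ds)"
  using assms
  by (auto simp: lincomb_def vadd_def smult_def sum_distrib_left sum.distrib algebra_simps intro!: sum.cong)

lemma mem_span2_lincomb:
  assumes "length cs = length ds"
  shows "y \<in> span2 (lincomb f cs) (lincomb f ds) \<longleftrightarrow>
    (\<exists>a b. y = lincomb f (map2 (\<lambda>c d. a * c + b * d) cs ds))"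
  using assms by (auto simp: span2_def lincomb_combine)

definition orthogonal_family ::
    "(('n \<Rightarrow> 'k::field) \<Rightarrow> 'k) \<Rightarrow> (nat \<Rightarrow> 'n \<Rightarrow> 'k) \<Rightarrow> nat \<Rightarrow> bool" where
  "orthogonal_family Q f m \<longleftrightarrow> (\<forall>i<m. \<forall>j<m. i \<noteq> j \<longrightarrow> bform Q (f i) (f j) = 0)"

locale quadratic_space =
  fixes Q :: "('n \<Rightarrow> 'k::field) \<Rightarrow> 'k"
  assumes quadratic_form: "is_quadratic_form Q"
begin

lemma Q_smult: "Q (smult c v) = c^2 * Q v"
  using quadratic_form by (simp add: is_quadratic_form_def)

lemma bform_add_left: "bform Q (vadd u u') v = bform Q u v + bform Q u' v"
  using quadratic_form by (simp add: is_quadratic_form_def)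

lemma bform_smult_left: "bform Q (smult c u) v = c * bform Q u v"
  using quadratic_form by (simp add: is_quadratic_form_def)

lemma bform_sym: "bform Q u v = bform Q v u"
  by (simp add: bform_def vadd_comm)

lemma bform_add_right: "bform Q v (vadd u u') = bform Q v u + bform Q v u'"
  by (metis bform_sym bform_add_left)

lemma bform_smult_right: "bform Q v (smult c u) = c * bform Q v u"
  by (metis bform_sym bform_smult_left)

lemma Q_vzero: "Q vzero = 0"
  by (metis Q_smult vzero_eq_smult_0 mult_zero_left zero_power2)

lemma bform_vzero_left: "bform Q vzero v = 0"
  by (metis bform_smult_left vzero_eq_smult_0 mult_zero_left)

lemma Q_vadd: "Q (vadd u v) = Q u + Q v + bform Q u v"
  by (simp add: bform_def)

lemma bform_self: "bform Q v v = 2 * Q v"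
proof -
  have "vadd v v = smult 2 v"
    by (auto simp: vadd_def smult_def)
  then show ?thesis
    by (simp add: bform_def Q_smult power2_eq_square)
qed

lemma bform_lincomb_left: "bform Q (lincomb f cs) w = (\<Sum>j<length cs. cs ! j * bform Q (f j) w)"
  by (induction cs rule: rev_induct)
    (simp_all add: lincomb_Nil lincomb_snoc bform_vzero_left bform_add_left bform_smult_left nth_append)

lemma bform_lincomb_right: "bform Q w (lincomb f cs) = (\<Sum>j<length cs. cs ! j * bform Q w (f j))"
  by (simp add: bform_sym[of w] bform_lincomb_left)

lemma Q_lincomb:
  assumes "orthogonal_family Q f (length cs)"
  shows "Q (lincomb f cs) = (\<Sum>j<length cs. (cs ! j)^2 * Q (f j))"
  using assms
proof (induction cs rule: rev_induct)
  case Nil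
  then show ?case by (simp add: lincomb_Nil Q_vzero)
next
  case (snoc c cs)
  then have orth: "orthogonal_family Q f (length cs)"
    by (auto simp: orthogonal_family_def)
  have "bform Q (lincomb f cs) (smult c (f (length cs))) = 0"
    using snoc.prems by (simp add: bform_lincomb_left bform_smult_right orthogonal_family_def)
  then show ?case
    using snoc.IH[OF orth] by (simp add: lincomb_snoc Q_vadd Q_smult nth_append)
qed

lemma bform_lincomb:
  assumes "orthogonal_family Q f (length cs)" and "length ds = length cs"
  shows "bform Q (lincomb f cs) (lincomb f ds) = (\<Sum>j<length cs. 2 * cs ! j * ds ! j * Q (f j))"
proof -
  let ?s = "map2 (\<lambda>c d. 1 * c + 1 * d) cs ds"
  have "vadd (lincomb f cs) (lincomb f ds) = lincomb f ?s"
    using lincomb_combine[of cs ds 1 f 1] assms(2) by simp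
  moreover have "orthogonal_family Q f (length ?s)" "orthogonal_family Q f (length ds)"
    using assms by simp_all
  ultimately have "bform Q (lincomb f cs) (lincomb f ds) =
      (\<Sum>j<length cs. (cs ! j + ds ! j)^2 * Q (f j)) - (\<Sum>j<length cs. (cs ! j)^2 * Q (f j))
        - (\<Sum>j<length cs. (ds ! j)^2 * Q (f j))"
    using assms by (simp add: bform_def Q_lincomb)
  also have "\<dots> = (\<Sum>j<length cs. 2 * cs ! j * ds ! j * Q (f j))"
    by (simp add: sum_subtractf[symmetric] power2_eq_square algebra_simps)
  finally show ?thesis .
qed

end

section \<open>Finite fields of odd order\<close>

lemma of_nat_CARD_field_eq_0: "of_nat CARD('k::{field,finite}) = (0::'k)"
proof -
  have "(\<lambda>x::'k. x + 1) ` UNIV = UNIV"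
    by (metis surj_def diff_add_cancel)
  then have "(\<Sum>x\<in>(UNIV::'k set). x + 1) = (\<Sum>x\<in>UNIV. x)"
    by (metis add_right_imp_eq inj_onI sum.reindex_cong)
  then show ?thesis
    by (simp add: sum.distrib)
qed

lemma two_neq_zero_if_odd_card:
  assumes "odd CARD('k::{field,finite})"
  shows "(2::'k) \<noteq> 0"
proof
  assume two: "(2::'k) = 0"
  obtain m where "CARD('k) = 2 * m + 1"
    using assms oddE by blast
  then have "(2::'k) * of_nat m + 1 = 0"
    using of_nat_CARD_field_eq_0[where 'k='k] by (simp add: add.commute)
  then show False
    using two by simp
qed

lemma card_le_twice_card_squares: "CARD('k::{field,finite}) \<le> 2 * card (range (\<lambda>x::'k. x^2))"
proof -
  have "(UNIV::'k set) = (\<Union>s\<in>range (\<lambda>x::'k. x^2). {x. x^2 = s})"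
    by auto
  then have "CARD('k) \<le> (\<Sum>s\<in>range (\<lambda>x::'k. x^2). card {x. x^2 = s})"
    by (metis card_UN_le finite)
  also have "\<dots> \<le> (\<Sum>s\<in>range (\<lambda>x::'k. x^2). 2)"
  proof (rule sum_mono)
    fix s assume "s \<in> range (\<lambda>x::'k. x^2)"
    then obtain r where "s = r^2"
      by auto
    then have "{x. x^2 = s} \<subseteq> {r, -r}"
      by (auto simp: power2_eq_iff)
    then have "card {x. x^2 = s} \<le> card {r, -r}"
      by (intro card_mono) auto
    also have "\<dots> \<le> 2"
      by (simp add: card_insert_if)
    finally show "card {x. x^2 = s} \<le> 2" .
  qed
  finally show ?thesis
    by simp
qed

text \<open>Pigeonhole: the values of a x^2 and those of c - b y^2 form two sets of more than q/2
  elements each.\<close>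
lemma binary_diagonal_form_universal:
  fixes a b c :: "'k::{field,finite}"
  assumes "odd CARD('k)" and "a \<noteq> 0" and "b \<noteq> 0"
  shows "\<exists>x y. a * x^2 + b * y^2 = c"
proof (rule ccontr)
  assume no_solution: "\<not> ?thesis"
  let ?S = "range (\<lambda>x::'k. x^2)"
  have "card ((\<lambda>s. a * s) ` ?S) = card ?S" "card ((\<lambda>s. c - b * s) ` ?S) = card ?S"
    using assms by (auto intro!: card_image simp: inj_on_def)
  moreover have "(\<lambda>s. a * s) ` ?S \<inter> (\<lambda>s. c - b * s) ` ?S = {}"
    using no_solution by (auto simp: eq_diff_eq)
  ultimately have "card ((\<lambda>s. a * s) ` ?S \<union> (\<lambda>s. c - b * s) ` ?S) = 2 * card ?S"
    by (simp add: card_Un_disjoint)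
  moreover have "card ((\<lambda>s. a * s) ` ?S \<union> (\<lambda>s. c - b * s) ` ?S) \<le> CARD('k)"
    by (rule card_mono) auto
  ultimately show False
    using card_le_twice_card_squares[where 'k='k] assms(1) by presburger
qed

section \<open>Orthogonal families of anisotropic vectors\<close>

locale odd_quadratic_space = quadratic_space Q
  for Q :: "('n \<Rightarrow> 'k::field) \<Rightarrow> 'k" +
  assumes two_neq_zero: "(2::'k) \<noteq> 0"
begin

lemma anisotropic_bform_self: "Q v \<noteq> 0 \<Longrightarrow> bform Q v v \<noteq> 0"
  by (simp add: bform_self two_neq_zero)

end

locale finite_quadratic_space = odd_quadratic_space Q
  for Q :: "('n::finite \<Rightarrow> 'k::{field,finite}) \<Rightarrow> 'k" +
  assumes nondegenerate: "nondegenerate Q"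
begin

lemma exists_nonzero_orthogonal:
  assumes "m < CARD('n)"
  shows "\<exists>x. x \<noteq> vzero \<and> (\<forall>i<m. bform Q x (f i) = 0)"
proof -
  define \<phi> where "\<phi> x = map (\<lambda>i. bform Q x (f i)) [0..<m]" for x
  have "\<not> inj \<phi>"
  proof
    assume "inj \<phi>"
    then have "card (UNIV :: ('n \<Rightarrow> 'k) set) \<le>
        card {xs. set xs \<subseteq> (UNIV::'k set) \<and> length xs = m}"
      using finite_lists_length_eq[of "UNIV::'k set" m]
      by (intro card_inj_on_le[where f = \<phi>]) (auto simp: \<phi>_def)
    then have "CARD('k) ^ CARD('n) \<le> CARD('k) ^ m"
      using card_lists_length_eq[of "UNIV::'k set" m] by (simp add: card_fun)
    moreover have "2 \<le> CARD('k)"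
      using card_mono[of UNIV "{0::'k, 1}"] by simp
    ultimately show False
      using assms power_strict_increasing[of m "CARD('n)" "CARD('k)"] by simp
  qed
  then obtain x y where "x \<noteq> y" "\<phi> x = \<phi> y"
    unfolding inj_def by blast
  define d where "d = vadd x (smult (-1) y)"
  have "d \<noteq> vzero"
    using \<open>x \<noteq> y\<close> by (auto simp: d_def vadd_def smult_def vzero_def fun_eq_iff)
  moreover have "\<forall>i<m. bform Q d (f i) = 0"
    using \<open>\<phi> x = \<phi> y\<close> by (simp add: d_def \<phi>_def bform_add_left bform_smult_left)
  ultimately show ?thesis
    by blast
qed

text \<open>If the orthogonal vector x is singular, take w with bform Q x w \<noteq> 0 and subtract from it
  its projection y' onto the f i: then bform Q x (w - y') = bform Q x w, so one of w - y' and
  x + (w - y') is anisotropic.\<close>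
lemma exists_anisotropic_orthogonal:
  assumes orth: "orthogonal_family Q f m" and aniso: "\<forall>i<m. Q (f i) \<noteq> 0" and "m < CARD('n)"
  shows "\<exists>e. Q e \<noteq> 0 \<and> (\<forall>i<m. bform Q e (f i) = 0)"
proof -
  obtain x where x: "x \<noteq> vzero" "\<forall>i<m. bform Q x (f i) = 0"
    using exists_nonzero_orthogonal \<open>m < CARD('n)\<close> by blast
  show ?thesis
  proof (cases "Q x = 0")
    case False
    then show ?thesis
      using x by blast
  next
    case True
    obtain w where w: "bform Q x w \<noteq> 0"
      using nondegenerate x(1) unfolding nondegenerate_def by blast
    define c where "c i = - bform Q w (f i) / bform Q (f i) (f i)" for i
    define y where "y = vadd w (lincomb f (map c [0..<m]))"
    have y_orth: "\<forall>j<m. bform Q y (f j) = 0"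
    proof (intro allI impI)
      fix j assume "j < m"
      have "(\<Sum>i<m. c i * bform Q (f i) (f j)) = c j * bform Q (f j) (f j)"
        using orth \<open>j < m\<close> by (simp add: sum.remove[of "{..<m}" j] orthogonal_family_def sum.neutral)
      then have "bform Q y (f j) = bform Q w (f j) + c j * bform Q (f j) (f j)"
        using \<open>j < m\<close> by (simp add: y_def bform_add_left bform_lincomb_left)
      then show "bform Q y (f j) = 0"
        using aniso \<open>j < m\<close> anisotropic_bform_self by (simp add: c_def)
    qed
    have "bform Q x (lincomb f (map c [0..<m])) = 0"
      using x(2) by (simp add: bform_lincomb_right)
    then have "bform Q x y \<noteq> 0"
      using w by (simp add: y_def bform_add_right)
    then have "Q y \<noteq> 0 \<or> Q (vadd x y) \<noteq> 0"
      using \<open>Q x = 0\<close> by (auto simp: Q_vadd)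
    moreover have "\<forall>i<m. bform Q (vadd x y) (f i) = 0"
      using x(2) y_orth by (simp add: bform_add_left)
    ultimately show ?thesis
      using y_orth by blast
  qed
qed

lemma extend_anisotropic_orthogonal_family:
  assumes "orthogonal_family Q f m" and "\<forall>i<m. Q (f i) \<noteq> 0" and "m \<le> m'" and "m' \<le> CARD('n)"
  shows "\<exists>g. orthogonal_family Q g m' \<and> (\<forall>i<m'. Q (g i) \<noteq> 0) \<and> (\<forall>i<m. g i = f i)"
  using assms(3,4)
proof (induction m' rule: dec_induct)
  case base
  then show ?case
    using assms(1,2) by blast
next
  case (step l)
  then obtain g where g: "orthogonal_family Q g l" "\<forall>i<l. Q (g i) \<noteq> 0" "\<forall>i<m. g i = f i"
    by auto
  obtain e where e: "Q e \<noteq> 0" "\<forall>i<l. bform Q e (g i) = 0"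
    using exists_anisotropic_orthogonal[OF g(1,2)] step.prems by auto
  have "orthogonal_family Q (g(l := e)) (Suc l)"
    using g(1) e(2) bform_sym by (auto simp: orthogonal_family_def less_Suc_eq)
  moreover have "\<forall>i<Suc l. Q ((g(l := e)) i) \<noteq> 0"
    using g(2) e(1) by (simp add: less_Suc_eq)
  moreover have "\<forall>i<m. (g(l := e)) i = f i"
    using g(3) step.hyps(1) by simp
  ultimately show ?case
    by blast
qed

end

section \<open>Adjacency of planes\<close>

text \<open>Dimension at most 2, stated without a notion of dimension: any two independent vectors
  of Z span Z.\<close>
definition dim_le_2 :: "('n \<Rightarrow> 'k::field) set \<Rightarrow> bool" where
  "dim_le_2 Z \<longleftrightarrow> (\<forall>a\<in>Z. \<forall>b\<in>Z. a \<noteq> vzero \<longrightarrow> (\<forall>c. b \<noteq> smult c a) \<longrightarrow>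
      (\<forall>z\<in>Z. \<exists>c d. z = vadd (smult c a) (smult d b)))"

text \<open>The last clause says that W + Z is degenerate: its radical contains w + z.\<close>
definition degenerate_adjacent ::
    "(('n \<Rightarrow> 'k::field) \<Rightarrow> 'k) \<Rightarrow> ('n \<Rightarrow> 'k) set \<Rightarrow> ('n \<Rightarrow> 'k) set \<Rightarrow> bool" where
  "degenerate_adjacent Q W Z \<longleftrightarrow> W \<noteq> Z \<and> dim_le_2 W \<and> dim_le_2 Z \<and>
     (\<exists>x. x \<noteq> vzero \<and> x \<in> W \<and> x \<in> Z) \<and>
     (\<exists>w\<in>W. \<exists>z\<in>Z. vadd w z \<noteq> vzero \<and>
        (\<forall>y\<in>W. bform Q (vadd w z) y = 0) \<and> (\<forall>y\<in>Z. bform Q (vadd w z) y = 0))"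

lemma symp_degenerate_adjacent: "symp (degenerate_adjacent Q)"
  unfolding degenerate_adjacent_def by (rule sympI) (metis vadd_comm)

text \<open>Cramer's rule in the plane spanned by u and v.\<close>
lemma combination_cramer:
  fixes u v :: "'n \<Rightarrow> 'k::field" and a1 a2 b1 b2 c1 c2 :: 'k
  defines "D \<equiv> a1 * b2 - a2 * b1"
  assumes "D \<noteq> 0"
  shows "(\<lambda>i. c1 * u i + c2 * v i) =
    vadd (smult ((c1 * b2 - c2 * b1) / D) (\<lambda>i. a1 * u i + a2 * v i))
      (smult ((a1 * c2 - a2 * c1) / D) (\<lambda>i. b1 * u i + b2 * v i))"
proof
  fix i
  have "(c1 * b2 - c2 * b1) * (a1 * u i + a2 * v i) + (a1 * c2 - a2 * c1) * (b1 * u i + b2 * v i)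
      = D * (c1 * u i + c2 * v i)"
    by (simp add: D_def algebra_simps)
  then show "c1 * u i + c2 * v i = vadd (smult ((c1 * b2 - c2 * b1) / D) (\<lambda>i. a1 * u i + a2 * v i))
      (smult ((a1 * c2 - a2 * c1) / D) (\<lambda>i. b1 * u i + b2 * v i)) i"
    using \<open>D \<noteq> 0\<close> by (simp add: vadd_def smult_def add_divide_distrib[symmetric] eq_divide_eq)
qed

lemma span2_dim_le_2: "dim_le_2 (span2 u v)"
  unfolding dim_le_2_def
proof (intro ballI impI allI)
  fix a b z
  assume "a \<in> span2 u v" "b \<in> span2 u v" "z \<in> span2 u v"
    and a_nonzero: "a \<noteq> vzero" and not_multiple: "\<forall>c. b \<noteq> smult c a"
  then obtain a1 a2 b1 b2 c1 c2 where
    a: "a = (\<lambda>i. a1 * u i + a2 * v i)" and b: "b = (\<lambda>i. b1 * u i + b2 * v i)" and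
    z: "z = (\<lambda>i. c1 * u i + c2 * v i)"
    by (auto simp: span2_def vadd_def smult_def)
  have "a1 * b2 - a2 * b1 \<noteq> 0"
  proof
    assume "a1 * b2 - a2 * b1 = 0"
    moreover have "a1 \<noteq> 0 \<or> a2 \<noteq> 0"
      using a_nonzero by (auto simp: a vzero_def)
    ultimately obtain c where "b = smult c a"
    proof (elim disjE)
      assume "a1 \<noteq> 0"
      then show thesis
        using \<open>a1 * b2 - a2 * b1 = 0\<close> that[of "b1 / a1"]
        by (auto simp: a b smult_def fun_eq_iff field_simps)
    next
      assume "a2 \<noteq> 0"
      then show thesis
        using \<open>a1 * b2 - a2 * b1 = 0\<close> that[of "b2 / a2"]
        by (auto simp: a b smult_def fun_eq_iff field_simps)
    qed
    then show False
      using not_multiple by blast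
  qed
  then show "\<exists>c d. z = vadd (smult c a) (smult d b)"
    unfolding a b z by (blast intro: combination_cramer)
qed

lemma span2_add_smult_mem:
  assumes "x \<in> span2 u v" and "y \<in> span2 u v"
  shows "vadd x (smult c y) \<in> span2 u v"
proof -
  obtain a1 a2 b1 b2 where "x = vadd (smult a1 u) (smult a2 v)" and "y = vadd (smult b1 u) (smult b2 v)"
    using assms by (auto simp: span2_def)
  then have "vadd x (smult c y) = vadd (smult (a1 + c * b1) u) (smult (a2 + c * b2) v)"
    by (auto simp: vadd_def smult_def algebra_simps)
  then show ?thesis
    by (auto simp: span2_def)
qed

lemma span2_smult_mem:
  assumes "y \<in> span2 u v"
  shows "smult c y \<in> span2 u v"
proof -
  obtain b1 b2 where "y = vadd (smult b1 u) (smult b2 v)"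
    using assms by (auto simp: span2_def)
  then have "smult c y = vadd (smult (c * b1) u) (smult (c * b2) v)"
    by (auto simp: vadd_def smult_def algebra_simps)
  then show ?thesis
    by (auto simp: span2_def)
qed

lemma additive_vzero:
  assumes "\<forall>u v. g (vadd u v) = vadd (g u) (g v)"
  shows "g vzero = vzero"
proof -
  have "vadd vzero vzero = vzero"
    by (simp add: vadd_def vzero_def)
  then have "g vzero = vadd (g vzero) (g vzero)"
    using assms by metis
  then have "g vzero i = 0" for i
    by (metis vadd_def add_cancel_right_right)
  then show ?thesis
    by (auto simp: vzero_def)
qed

lemma field_aut_diff:
  assumes "field_aut \<sigma>"
  shows "\<sigma> (a - b) = \<sigma> a - \<sigma> b"
  using assms unfolding field_aut_def by (metis diff_add_cancel eq_diff_eq)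

lemma field_aut_zero: "field_aut \<sigma> \<Longrightarrow> \<sigma> 0 = 0"
  using field_aut_diff[of \<sigma> 0 0] by simp

lemma semisimilarity_bform:
  assumes "semisimilarity Q g"
  shows "\<exists>\<sigma> \<mu>. field_aut \<sigma> \<and> (\<forall>u v. bform Q (g u) (g v) = \<mu> * \<sigma> (bform Q u v))"
proof -
  obtain \<sigma> \<mu> where \<sigma>: "field_aut \<sigma>"
    and Q: "\<forall>v. Q (g v) = \<mu> * \<sigma> (Q v)" and add: "\<forall>u v. g (vadd u v) = vadd (g u) (g v)"
    using assms unfolding semisimilarity_def by blast
  have "\<sigma> (a + b) = \<sigma> a + \<sigma> b" for a b
    using \<sigma> unfolding field_aut_def by blast
  then have "bform Q (g u) (g v) = \<mu> * \<sigma> (bform Q u v)" for u v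
    using \<sigma> by (simp add: bform_def Q field_aut_diff algebra_simps flip: add)
  then show ?thesis
    using \<sigma> by blast
qed

lemma dim_le_2_image:
  assumes "semisimilarity Q g" and "dim_le_2 Z"
  shows "dim_le_2 (g ` Z)"
  unfolding dim_le_2_def
proof (intro ballI impI allI)
  obtain \<sigma> where add: "\<forall>u v. g (vadd u v) = vadd (g u) (g v)"
    and smult: "\<forall>c v. g (smult c v) = smult (\<sigma> c) (g v)"
    using assms(1) unfolding semisimilarity_def by blast
  fix a' b' z'
  assume "a' \<in> g ` Z" "b' \<in> g ` Z" "z' \<in> g ` Z" "a' \<noteq> vzero"
    and not_multiple: "\<forall>c. b' \<noteq> smult c a'"
  then obtain a b z where abz: "a \<in> Z" "b \<in> Z" "z \<in> Z" "a' = g a" "b' = g b" "z' = g z"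
    by blast
  have "a \<noteq> vzero"
    using \<open>a' \<noteq> vzero\<close> abz(4) additive_vzero[OF add] by auto
  moreover have "b \<noteq> smult c a" for c
  proof
    assume "b = smult c a"
    then have "b' = smult (\<sigma> c) a'"
      using abz(4,5) smult by simp
    then show False
      using not_multiple by blast
  qed
  ultimately obtain c d where "z = vadd (smult c a) (smult d b)"
    using assms(2) abz(1-3) unfolding dim_le_2_def by meson
  then have "z' = vadd (smult (\<sigma> c) a') (smult (\<sigma> d) b')"
    using abz(4-6) add smult by simp
  then show "\<exists>c d. z' = vadd (smult c a') (smult d b')"
    by blast
qed

lemma degenerate_adjacent_image:
  assumes g: "semisimilarity Q g" and adj: "degenerate_adjacent Q W Z"
  shows "degenerate_adjacent Q (act g W) (act g Z)"
proof -
  obtain \<sigma> \<mu> where \<sigma>: "field_aut \<sigma>"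
    and bform: "\<forall>u v. bform Q (g u) (g v) = \<mu> * \<sigma> (bform Q u v)"
    using semisimilarity_bform[OF g] by (elim exE conjE)
  have "inj g"
    using g by (simp add: semisimilarity_def bij_is_inj)
  have add: "\<forall>u v. g (vadd u v) = vadd (g u) (g v)"
    using g by (simp add: semisimilarity_def)
  have g_nonzero: "g x \<noteq> vzero" if "x \<noteq> vzero" for x
  proof
    assume "g x = vzero"
    then have "g x = g vzero"
      using additive_vzero[OF add] by simp
    then show False
      using \<open>inj g\<close> that by (simp add: inj_eq)
  qed
  have radical: "\<forall>y\<in>g ` S. bform Q (vadd (g w) (g z)) y = 0"
    if "\<forall>y\<in>S. bform Q (vadd w z) y = 0" for S w z
    using that by (auto simp: bform field_aut_zero[OF \<sigma>] simp flip: add)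
  obtain x w z where "W \<noteq> Z" "dim_le_2 W" "dim_le_2 Z" "x \<noteq> vzero" "x \<in> W" "x \<in> Z"
    and wz: "w \<in> W" "z \<in> Z" "vadd w z \<noteq> vzero"
      "\<forall>y\<in>W. bform Q (vadd w z) y = 0" "\<forall>y\<in>Z. bform Q (vadd w z) y = 0"
    using adj unfolding degenerate_adjacent_def by blast
  moreover have "vadd (g w) (g z) \<noteq> vzero"
    using g_nonzero[OF wz(3)] add by simp
  moreover have "g ` W \<noteq> g ` Z"
    using \<open>inj g\<close> \<open>W \<noteq> Z\<close> by (simp add: inj_image_eq_iff)
  ultimately show ?thesis
    unfolding degenerate_adjacent_def act_def
    using g_nonzero dim_le_2_image[OF g] radical[OF wz(4)] radical[OF wz(5)] by blast
qed

section \<open>Planes of type O2-minus\<close>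

context odd_quadratic_space
begin

lemma span2_in_O2minus_spaces:
  assumes anisotropic: "\<forall>a b. Q (vadd (smult a u) (smult b v)) = 0 \<longrightarrow> a = 0 \<and> b = 0"
  shows "span2 u v \<in> O2minus_spaces Q"
proof -
  have "\<forall>a b. vadd (smult a u) (smult b v) = vzero \<longrightarrow> a = 0 \<and> b = 0"
    using anisotropic Q_vzero by metis
  moreover have minus: "minus_type Q (span2 u v)"
    unfolding minus_type_def span2_def using anisotropic vadd_smult_zero by blast
  moreover have "nondeg_on Q (span2 u v)"
    unfolding nondeg_on_def
  proof (intro ballI impI)
    fix w assume "w \<in> span2 u v" and "\<forall>w'\<in>span2 u v. bform Q w w' = 0"
    then have "bform Q w w = 0"
      by blast
    then have "Q w = 0"
      using bform_self two_neq_zero by simp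
    then show "w = vzero"
      using minus \<open>w \<in> span2 u v\<close> unfolding minus_type_def by blast
  qed
  ultimately show ?thesis
    unfolding O2minus_spaces_def two_subspace_def by blast
qed

lemma O2minus_space_orthogonal_basis:
  assumes "W \<in> O2minus_spaces Q"
  shows "\<exists>u v. bform Q u v = 0 \<and> (\<forall>a b. a^2 * Q u + b^2 * Q v = 0 \<longrightarrow> a = 0 \<and> b = 0)"
proof -
  obtain u v0 where independent: "\<forall>a b. vadd (smult a u) (smult b v0) = vzero \<longrightarrow> a = 0 \<and> b = 0"
    and W: "W = span2 u v0" and minus: "minus_type Q W"
    using assms unfolding O2minus_spaces_def two_subspace_def by blast
  have anisotropic: "a = 0 \<and> b = 0" if "Q (vadd (smult a u) (smult b v0)) = 0" for a b
    using that minus independent unfolding W minus_type_def span2_def by blast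
  have "Q u \<noteq> 0"
    using anisotropic[of 1 0] by (auto simp: vadd_def smult_def)
  define k where "k = bform Q v0 u / bform Q u u"
  define v where "v = vadd v0 (smult (-k) u)"
  have "bform Q u v = 0"
    using \<open>Q u \<noteq> 0\<close> anisotropic_bform_self
    by (simp add: v_def k_def bform_add_right bform_smult_right bform_sym[of u v0])
  moreover have "a = 0 \<and> b = 0" if "a^2 * Q u + b^2 * Q v = 0" for a b
  proof -
    have "vadd (smult a u) (smult b v) = vadd (smult (a - b * k) u) (smult b v0)"
      by (auto simp: v_def vadd_def smult_def algebra_simps)
    moreover have "Q (vadd (smult a u) (smult b v)) = a^2 * Q u + b^2 * Q v"
      using \<open>bform Q u v = 0\<close> by (simp add: Q_vadd Q_smult bform_smult_left bform_smult_right)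
    ultimately have "a - b * k = 0 \<and> b = 0"
      using anisotropic that by metis
    then show ?thesis
      by simp
  qed
  ultimately show ?thesis
    by blast
qed

lemma orthogonal_O2minus_spaces_not_adjacent:
  assumes "W \<in> O2minus_spaces Q" and "W' \<in> O2minus_spaces Q"
    and orth: "\<forall>x\<in>W'. \<forall>y\<in>W. bform Q x y = 0"
  shows "W \<noteq> W'" and "\<not> degenerate_adjacent Q W W'"
proof -
  obtain u v where independent: "\<forall>a b. vadd (smult a u) (smult b v) = vzero \<longrightarrow> a = 0 \<and> b = 0"
    and W: "W = span2 u v" and nondeg: "nondeg_on Q W"
    using assms(1) unfolding O2minus_spaces_def two_subspace_def by blast
  have meet: "x = vzero" if "x \<in> W" "x \<in> W'" for x
    using nondeg orth that unfolding nondeg_on_def by blast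
  have u: "vadd (smult 1 u) (smult 0 v) = u"
    by (simp add: vadd_def smult_def)
  have "u \<in> W"
    unfolding W span2_def by (intro CollectI exI[of _ 1] exI[of _ 0]) (simp add: vadd_def smult_def)
  moreover have "u \<noteq> vzero"
    using independent u by (metis one_neq_zero)
  ultimately show "W \<noteq> W'"
    using meet by blast
  show "\<not> degenerate_adjacent Q W W'"
    using meet unfolding degenerate_adjacent_def by blast
qed

text \<open>A common neighbour Z would be spanned by some a \<in> W and b \<in> W', so the radical vector
  w + z of W + Z = W \<oplus> \<langle>b\<rangle> would be a multiple of the anisotropic vector b.\<close>
lemma orthogonal_O2minus_spaces_no_common_neighbour:
  assumes "W \<in> O2minus_spaces Q" and "W' \<in> O2minus_spaces Q"
    and orth: "\<forall>x\<in>W'. \<forall>y\<in>W. bform Q x y = 0"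
  shows "\<not> (degenerate_adjacent Q W Z \<and> degenerate_adjacent Q Z W')"
proof
  obtain u v where W: "W = span2 u v" and nondeg: "nondeg_on Q W"
    using assms(1) unfolding O2minus_spaces_def two_subspace_def by blast
  have minus: "minus_type Q W'"
    using assms(2) unfolding O2minus_spaces_def by blast
  assume adj: "degenerate_adjacent Q W Z \<and> degenerate_adjacent Q Z W'"
  then obtain a b where a: "a \<noteq> vzero" "a \<in> W" "a \<in> Z"
    and b: "b \<noteq> vzero" "b \<in> Z" "b \<in> W'"
    unfolding degenerate_adjacent_def by blast
  from adj obtain w z where wz: "w \<in> W" "z \<in> Z" "vadd w z \<noteq> vzero"
    "\<forall>y\<in>W. bform Q (vadd w z) y = 0" "\<forall>y\<in>Z. bform Q (vadd w z) y = 0" and "dim_le_2 Z"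
    unfolding degenerate_adjacent_def by blast
  have "b \<noteq> smult c a" for c
    using nondeg orth b span2_smult_mem[of a u v c] a(2) unfolding W nondeg_on_def by blast
  then obtain c d where z: "z = vadd (smult c a) (smult d b)"
    using \<open>dim_le_2 Z\<close> a b wz(2) unfolding dim_le_2_def by meson
  define w' where "w' = vadd w (smult c a)"
  have "w' \<in> W"
    unfolding w'_def W by (rule span2_add_smult_mem) (use wz(1) a(2) W in auto)
  have wz_split: "vadd w z = vadd w' (smult d b)"
    by (auto simp: z w'_def vadd_def add.assoc)
  have "bform Q w' y = 0" if "y \<in> W" for y
  proof -
    have "bform Q (vadd w z) y = bform Q w' y + d * bform Q b y"
      by (simp add: wz_split bform_add_left bform_smult_left)
    then show ?thesis
      using wz(4) that orth b(3) by simp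
  qed
  then have "w' = vzero"
    using nondeg \<open>w' \<in> W\<close> unfolding nondeg_on_def by blast
  then have radical: "vadd w z = smult d b"
    unfolding wz_split by (auto simp: vadd_def vzero_def)
  then have "d \<noteq> 0"
    using wz(3) by (auto simp: smult_def vzero_def)
  moreover have "bform Q (vadd w z) b = d * (2 * Q b)"
    by (simp add: radical bform_smult_left bform_self)
  ultimately have "Q b = 0"
    using wz(5) b(2) two_neq_zero by simp
  then show False
    using minus b unfolding minus_type_def by blast
qed

context
  fixes f :: "nat \<Rightarrow> 'n \<Rightarrow> 'k"
  assumes orth: "orthogonal_family Q f 5"
    and binary: "\<forall>a b. a^2 * Q (f 0) + b^2 * Q (f 1) = 0 \<longrightarrow> a = 0 \<and> b = 0"
begin

lemma Q_lincomb5: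
  "Q (lincomb f [a, b, c, d, e]) =
     a^2 * Q (f 0) + b^2 * Q (f 1) + c^2 * Q (f 2) + d^2 * Q (f 3) + e^2 * Q (f 4)"
  using Q_lincomb[of f "[a, b, c, d, e]"] orth by (simp add: eval_nat_numeral)

lemma bform_lincomb5:
  "bform Q (lincomb f [a, b, c, d, e]) (lincomb f [a', b', c', d', e']) =
     2 * a * a' * Q (f 0) + 2 * b * b' * Q (f 1) + 2 * c * c' * Q (f 2) + 2 * d * d' * Q (f 3)
       + 2 * e * e' * Q (f 4)"
  using bform_lincomb[of f "[a, b, c, d, e]" "[a', b', c', d', e']"] orth by (simp add: eval_nat_numeral)

lemma plane_isometric_to_coordinate_plane_in_O2minus_spaces:
  assumes "length cs = 5" "length ds = 5"
    and "\<And>a b. Q (lincomb f (map2 (\<lambda>c d. a * c + b * d) cs ds)) = a^2 * Q (f 0) + b^2 * Q (f 1)"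
  shows "span2 (lincomb f cs) (lincomb f ds) \<in> O2minus_spaces Q"
proof (rule span2_in_O2minus_spaces, intro allI impI)
  fix a b
  assume "Q (vadd (smult a (lincomb f cs)) (smult b (lincomb f ds))) = 0"
  then have "a^2 * Q (f 0) + b^2 * Q (f 1) = 0"
    using assms by (simp add: lincomb_combine)
  then show "a = 0 \<and> b = 0"
    using binary by blast
qed

lemma coordinate_plane_in_O2minus_spaces:
  "span2 (lincomb f [1, 0, 0, 0, 0]) (lincomb f [0, 1, 0, 0, 0]) \<in> O2minus_spaces Q"
  by (rule plane_isometric_to_coordinate_plane_in_O2minus_spaces) (simp_all add: Q_lincomb5)

text \<open>The vector (0, 0, x, y, 1) is singular and orthogonal to the coordinate plane; adding it
  to the second basis vector tilts the plane without changing the form on it.\<close>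
lemma tilted_plane_in_O2minus_spaces:
  assumes singular: "Q (f 2) * x^2 + Q (f 3) * y^2 + Q (f 4) = 0"
  shows "span2 (lincomb f [1, 0, 0, 0, 0]) (lincomb f [0, 1, x, y, 1]) \<in> O2minus_spaces Q"
proof (rule plane_isometric_to_coordinate_plane_in_O2minus_spaces)
  fix a b
  have "Q (lincomb f [a, b, b * x, b * y, b]) =
      a^2 * Q (f 0) + b^2 * Q (f 1) + b^2 * (Q (f 2) * x^2 + Q (f 3) * y^2 + Q (f 4))"
    by (simp add: Q_lincomb5 power_mult_distrib algebra_simps)
  then show "Q (lincomb f (map2 (\<lambda>c d. a * c + b * d) [1, 0, 0, 0, 0] [0, 1, x, y, 1])) =
      a^2 * Q (f 0) + b^2 * Q (f 1)"
    using singular by simp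
qed simp_all

lemma tilted_plane_degenerate_adjacent:
  assumes "Q (f 4) \<noteq> 0" and singular: "Q (f 2) * x^2 + Q (f 3) * y^2 + Q (f 4) = 0"
  shows "degenerate_adjacent Q (span2 (lincomb f [1, 0, 0, 0, 0]) (lincomb f [0, 1, 0, 0, 0]))
      (span2 (lincomb f [1, 0, 0, 0, 0]) (lincomb f [0, 1, x, y, 1]))"
proof -
  let ?e = "\<lambda>a b c d e. lincomb f [a, b, c, d, e]"
  let ?X = "span2 (?e 1 0 0 0 0) (?e 0 1 0 0 0)" and ?Y = "span2 (?e 1 0 0 0 0) (?e 0 1 x y 1)"
  have mem_X: "z \<in> ?X \<longleftrightarrow> (\<exists>a b. z = ?e a b 0 0 0)" for z
    by (simp add: mem_span2_lincomb)
  have mem_Y: "z \<in> ?Y \<longleftrightarrow> (\<exists>a b. z = ?e a b (b * x) (b * y) b)" for z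
    by (simp add: mem_span2_lincomb)
  have bform_f4: "bform Q (?e a b c d e) (?e 0 0 0 0 1) = 2 * e * Q (f 4)" for a b c d e
    by (simp add: bform_lincomb5)
  have in_X: "?e 1 0 0 0 0 \<in> ?X" "?e 0 (-1) 0 0 0 \<in> ?X"
    unfolding mem_X by blast+
  have in_Y: "?e 1 0 0 0 0 \<in> ?Y" "?e 0 1 x y 1 \<in> ?Y"
    unfolding mem_Y by (intro exI[of _ 1] exI[of _ 0], simp) (intro exI[of _ 0] exI[of _ 1], simp)
  have "?X \<noteq> ?Y"
  proof
    assume "?X = ?Y"
    then obtain a b where "?e 0 1 x y 1 = ?e a b 0 0 0"
      using in_Y(2) mem_X by blast
    then show False
      using bform_f4[of 0 1 x y 1] bform_f4[of a b 0 0 0] \<open>Q (f 4) \<noteq> 0\<close> two_neq_zero by simp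
  qed
  moreover note in_X in_Y
  moreover have "Q (?e 1 0 0 0 0) \<noteq> 0"
    using binary[rule_format, of 1 0] by (auto simp: Q_lincomb5)
  then have "?e 1 0 0 0 0 \<noteq> vzero"
    using Q_vzero by auto
  moreover have "vadd (?e 0 (-1) 0 0 0) (?e 0 1 x y 1) = ?e 0 0 x y 1"
    using lincomb_combine[of "[0, -1, 0, 0, 0]" "[0, 1, x, y, 1]" 1 f 1] by simp
  moreover have "?e 0 0 x y 1 \<noteq> vzero"
    using bform_f4[of 0 0 x y 1] \<open>Q (f 4) \<noteq> 0\<close> two_neq_zero bform_vzero_left by auto
  moreover have "\<forall>z\<in>?X. bform Q (?e 0 0 x y 1) z = 0"
    using mem_X by (auto simp: bform_lincomb5)
  moreover have "bform Q (?e 0 0 x y 1) (?e a b (b * x) (b * y) b) = 0" for a b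
  proof -
    have "bform Q (?e 0 0 x y 1) (?e a b (b * x) (b * y) b) =
        2 * b * (Q (f 2) * x^2 + Q (f 3) * y^2 + Q (f 4))"
      by (simp add: bform_lincomb5 power2_eq_square algebra_simps)
    then show ?thesis
      using singular by simp
  qed
  then have "\<forall>z\<in>?Y. bform Q (?e 0 0 x y 1) z = 0"
    using mem_Y by auto
  ultimately show ?thesis
    unfolding degenerate_adjacent_def using span2_dim_le_2 by (metis (no_types, lifting))
qed

text \<open>This plane is isometric to the coordinate plane: its basis vectors are orthogonal,
  with norms Q (f 0) and Q (f 1).\<close>
lemma orthogonal_plane_in_O2minus_spaces:
  assumes first: "Q (f 2) * x^2 + Q (f 3) * y^2 = Q (f 0)"
    and second: "Q (f 2) * Q (f 3) * Q (f 0) * s^2 + Q (f 4) * t^2 = Q (f 1)"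
  shows "span2 (lincomb f [0, 0, x, y, 0]) (lincomb f [0, 0, s * Q (f 3) * y, - s * Q (f 2) * x, t])
      \<in> O2minus_spaces Q"
    and "\<forall>w\<in>span2 (lincomb f [0, 0, x, y, 0]) (lincomb f [0, 0, s * Q (f 3) * y, - s * Q (f 2) * x, t]).
      \<forall>z\<in>span2 (lincomb f [1, 0, 0, 0, 0]) (lincomb f [0, 1, 0, 0, 0]). bform Q w z = 0"
proof -
  have "Q (lincomb f [0, 0, a * x + b * (s * Q (f 3) * y), a * y + b * (- s * Q (f 2) * x), b * t]) =
      a^2 * (Q (f 2) * x^2 + Q (f 3) * y^2)
        + b^2 * (Q (f 2) * Q (f 3) * (Q (f 2) * x^2 + Q (f 3) * y^2) * s^2 + Q (f 4) * t^2)" for a b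
    by (simp add: Q_lincomb5 power2_eq_square algebra_simps)
  then show "span2 (lincomb f [0, 0, x, y, 0]) (lincomb f [0, 0, s * Q (f 3) * y, - s * Q (f 2) * x, t])
      \<in> O2minus_spaces Q"
    using first second by (intro plane_isometric_to_coordinate_plane_in_O2minus_spaces) simp_all
  show "\<forall>w\<in>span2 (lincomb f [0, 0, x, y, 0]) (lincomb f [0, 0, s * Q (f 3) * y, - s * Q (f 2) * x, t]).
      \<forall>z\<in>span2 (lincomb f [1, 0, 0, 0, 0]) (lincomb f [0, 1, 0, 0, 0]). bform Q w z = 0"
    by (auto simp: mem_span2_lincomb bform_lincomb5)
qed

end

end

context finite_quadratic_space
begin

lemma adjacent_and_orthogonal_O2minus_spaces:
  assumes "5 \<le> CARD('n)" and odd: "odd CARD('k)" and "bform Q u v = 0"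
    and binary: "\<forall>a b. a^2 * Q u + b^2 * Q v = 0 \<longrightarrow> a = 0 \<and> b = 0"
  shows "\<exists>X0 Y0 W. X0 \<in> O2minus_spaces Q \<and> Y0 \<in> O2minus_spaces Q \<and> W \<in> O2minus_spaces Q \<and>
    degenerate_adjacent Q X0 Y0 \<and> (\<forall>w\<in>W. \<forall>z\<in>X0. bform Q w z = 0)"
proof -
  let ?uv = "\<lambda>i::nat. if i = 0 then u else v"
  have "Q u \<noteq> 0" "Q v \<noteq> 0"
    using binary[rule_format, of 1 0] binary[rule_format, of 0 1] by auto
  moreover have "orthogonal_family Q ?uv 2"
    using \<open>bform Q u v = 0\<close> bform_sym[of v u] by (auto simp: orthogonal_family_def less_2_cases_iff)
  ultimately obtain f
    where f: "orthogonal_family Q f 5" "\<forall>i<5. Q (f i) \<noteq> 0" "\<forall>i<2. f i = ?uv i"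
    using extend_anisotropic_orthogonal_family[of ?uv 2 5] assms(1) by (auto simp: less_2_cases_iff)
  then have "f 0 = u" "f 1 = v"
    by auto
  have binary_f: "\<forall>a b. a^2 * Q (f 0) + b^2 * Q (f 1) = 0 \<longrightarrow> a = 0 \<and> b = 0"
    unfolding \<open>f 0 = u\<close> \<open>f 1 = v\<close> by (rule binary)
  have q: "Q (f 0) \<noteq> 0" "Q (f 2) \<noteq> 0" "Q (f 3) \<noteq> 0" "Q (f 4) \<noteq> 0"
    using f(2) by simp_all
  obtain x y where "Q (f 2) * x^2 + Q (f 3) * y^2 = - Q (f 4)"
    using binary_diagonal_form_universal[OF odd q(2,3)] by blast
  then have singular: "Q (f 2) * x^2 + Q (f 3) * y^2 + Q (f 4) = 0"
    by (simp add: eq_neg_iff_add_eq_0)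
  obtain x' y' where first: "Q (f 2) * x'^2 + Q (f 3) * y'^2 = Q (f 0)"
    using binary_diagonal_form_universal[OF odd q(2,3)] by blast
  have "Q (f 2) * Q (f 3) * Q (f 0) \<noteq> 0"
    using q by simp
  then obtain s t where second: "Q (f 2) * Q (f 3) * Q (f 0) * s^2 + Q (f 4) * t^2 = Q (f 1)"
    using binary_diagonal_form_universal[OF odd _ q(4)] by blast
  show ?thesis
    using coordinate_plane_in_O2minus_spaces[OF f(1) binary_f]
      tilted_plane_in_O2minus_spaces[OF f(1) binary_f singular]
      tilted_plane_degenerate_adjacent[OF f(1) binary_f q(4) singular]
      orthogonal_plane_in_O2minus_spaces[OF f(1) binary_f first second]
    by blast
qed

end

section \<open>Orbital graphs\<close>

lemma graph_dist_ge_3: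
  assumes edges: "\<And>s t. {s, t} \<in> E \<Longrightarrow> R s t"
    and "x \<noteq> y" and "\<not> R x y" and no_path2: "\<And>z. \<not> (R x z \<and> R z y)"
  shows "graph_dist E x y \<ge> 3"
proof (cases "\<exists>k. walk E x y k")
  case False
  then show ?thesis
    by (simp add: graph_dist_def)
next
  case True
  let ?k = "LEAST k. walk E x y k"
  obtain p where p: "length p = Suc ?k" "p ! 0 = x" "p ! ?k = y" "\<forall>i<?k. {p ! i, p ! Suc i} \<in> E"
    using LeastI_ex[OF True] unfolding walk_def by blast
  have "?k \<noteq> 0"
  proof
    assume "?k = 0"
    then show False
      using p(2,3) \<open>x \<noteq> y\<close> by simp
  qed
  moreover have "?k \<noteq> 1"
    using p edges \<open>\<not> R x y\<close> by force
  moreover have "?k \<noteq> 2"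
  proof
    assume "?k = 2"
    then have "{p ! 0, p ! 1} \<in> E" "{p ! 1, p ! 2} \<in> E"
      using p(4) by (simp_all add: numeral_2_eq_2)
    then show False
      using no_path2 edges p(2,3) \<open>?k = 2\<close> by metis
  qed
  ultimately show ?thesis
    using True by (simp add: graph_dist_def)
qed

lemma diam_action_ge_3:
  assumes "x \<in> X" "y \<in> X" "w \<in> X" "x \<noteq> y" "R x y" "symp R"
    and invariant: "\<And>g a b. g \<in> H \<Longrightarrow> R a b \<Longrightarrow> R (act g a) (act g b)"
    and "x \<noteq> w" "\<not> R x w" "\<And>z. \<not> (R x z \<and> R z w)"
  shows "diam_action H X \<ge> 3"
proof -
  define E where "E = {{act g x, act g y} | g. g \<in> H}"
  have "E \<in> orbitals H X"
    unfolding E_def orbitals_def using assms(1,2,4) by blast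
  have "R s t" if edge: "{s, t} \<in> E" for s t
  proof -
    obtain g where "g \<in> H" "{s, t} = {act g x, act g y}"
      using edge unfolding E_def by blast
    then show ?thesis
      using invariant[OF \<open>g \<in> H\<close> \<open>R x y\<close>] \<open>symp R\<close>
      by (auto simp: doubleton_eq_iff dest: sympD)
  qed
  then have "3 \<le> graph_dist E x w"
    using assms(8-10) by (rule graph_dist_ge_3)
  also have "\<dots> \<le> graph_diam X E"
    unfolding graph_diam_def using assms(1,3) by (intro Sup_upper) blast
  also have "\<dots> \<le> diam_action H X"
    unfolding diam_action_def using \<open>E \<in> orbitals H X\<close> by (intro Sup_upper) blast
  finally show ?thesis .
qed

theorem mainTheorem14:
  fixes Q :: "('n::finite \<Rightarrow> 'k::{field,finite}) \<Rightarrow> 'k"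
    and H :: "(('n \<Rightarrow> 'k) \<Rightarrow> ('n \<Rightarrow> 'k)) set"
  assumes "CARD('n) \<ge> 7"
    and "CARD('k) mod 4 = 1"
    and "is_quadratic_form Q"
    and "nondegenerate Q"
    and "H \<subseteq> {g. semisimilarity Q g}"
    and "is_group_of_maps H"
    and "\<forall>a b. isometry Q a \<and> isometry Q b \<longrightarrow> a \<circ> b \<circ> inv a \<circ> inv b \<in> H"
    and "primitive_on H (O2minus_spaces Q)"
  shows "diam_action H (O2minus_spaces Q) \<ge> 3"
proof -
  have odd: "odd CARD('k)"
    using assms(2) by (metis dvd_mod_iff even_numeral odd_one)
  interpret finite_quadratic_space Q
    using assms(3,4) two_neq_zero_if_odd_card[OF odd] by unfold_locales
  obtain W where "W \<in> O2minus_spaces Q"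
    using assms(8) unfolding primitive_on_def by blast
  then obtain u v
    where "bform Q u v = 0" "\<forall>a b. a^2 * Q u + b^2 * Q v = 0 \<longrightarrow> a = 0 \<and> b = 0"
    using O2minus_space_orthogonal_basis by blast
  moreover have "5 \<le> CARD('n)"
    using assms(1) by simp
  ultimately obtain X0 Y0 W' where X0: "X0 \<in> O2minus_spaces Q" and Y0: "Y0 \<in> O2minus_spaces Q"
    and W': "W' \<in> O2minus_spaces Q" and adjacent: "degenerate_adjacent Q X0 Y0"
    and orthogonal: "\<forall>w\<in>W'. \<forall>z\<in>X0. bform Q w z = 0"
    using adjacent_and_orthogonal_O2minus_spaces odd by blast
  have "X0 \<noteq> Y0"
    using adjacent by (simp add: degenerate_adjacent_def)
  have invariant: "degenerate_adjacent Q (act g A) (act g B)"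
    if "g \<in> H" "degenerate_adjacent Q A B" for g A B
    using that assms(5) degenerate_adjacent_image by blast
  show ?thesis
    by (rule diam_action_ge_3[OF X0 Y0 W' \<open>X0 \<noteq> Y0\<close> adjacent symp_degenerate_adjacent invariant
          orthogonal_O2minus_spaces_not_adjacent[OF X0 W' orthogonal]
          orthogonal_O2minus_spaces_no_common_neighbour[OF X0 W' orthogonal]])
qed

end
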